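(* Let $2\le s\le 2^{n-2}$ and let $S=\{\mathbf{v}_1,\dots,\mathbf{v}_s\}\subseteq\mathbb{F}_2^n$ be a set of $s$ distinct nonzero vectors with $\dim S\ge2$. Then for any nonnegative integers $b_1,\dots,b_s$ with $\sum_{j=1}^s b_j=2^{\dim S-2}$, the graph $G_S$ has an independent set $A$ of size $2^{\dim S-2}$ with $|A\cap V_j|=b_j$ for every $j\in[s]$.
   Context: For $S=\{\mathbf{v}_1,\dots,\mathbf{v}_s\}\subseteq\mathbb{F}_2^n$ a set of distinct nonzero vectors, $\langle S\rangle$ is its span and $\dim S=\dim\langle S\rangle$. The $s$-partite graph $G_S$ has vertex set $V_1\sqcup\dots\sqcup V_s$ (disjoint union), where $V_j=\{\{\mathbf{x},\mathbf{x}+\mathbf{v}_j\}:\mathbf{x}\in\langle S\rangle\}$ is the set of cosets of $\langle\mathbf{v}_j\rangle$ in $\langle S\rangle$ (so $|V_j|=2^{\dim S-1}$); there are no edges inside any $V_j$, and for $j_1\ne j_2$ a vertex $\{\mathbf{x}_1,\mathbf{x}_1+\mathbf{v}_{j_1}\}\in V_{j_1}$ is adjacent to $\{\mathbf{x}_2,\mathbf{x}_2+\mathbf{v}_{j_2}\}\in V_{j_2}$ iff these two sets intersect. *)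

theory Defs
  imports Main
begin

text \<open>Vectors of F_2^n are modelled as functions nat => bool vanishing from index n on;
  addition over F_2 is componentwise exclusive or.\<close>

definition vec2 :: "nat \<Rightarrow> (nat \<Rightarrow> bool) set" where
  "vec2 n = {v. \<forall>i\<ge>n. \<not> v i}"

definition vzero :: "nat \<Rightarrow> bool" where
  "vzero = (\<lambda>_. False)"

definition vadd :: "(nat \<Rightarrow> bool) \<Rightarrow> (nat \<Rightarrow> bool) \<Rightarrow> (nat \<Rightarrow> bool)" where
  "vadd x y = (\<lambda>i. x i \<noteq> y i)"

inductive_set span2 :: "(nat \<Rightarrow> bool) set \<Rightarrow> (nat \<Rightarrow> bool) set" for S where
  zero: "vzero \<in> span2 S"
| add: "x \<in> span2 S \<Longrightarrow> v \<in> S \<Longrightarrow> vadd x v \<in> span2 S"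

definition dim2 :: "(nat \<Rightarrow> bool) set \<Rightarrow> nat" where
  "dim2 S = (LEAST k. \<exists>B. finite B \<and> card B = k \<and> span2 B = span2 S)"

text \<open>The part V_j of G_S, for the vector family v indexed by {1..s} with S = v ` {1..s}.
  Vertices are tagged with their part index j (disjoint union).\<close>
definition part :: "(nat \<Rightarrow> (nat \<Rightarrow> bool)) \<Rightarrow> nat \<Rightarrow> nat \<Rightarrow> (nat \<times> (nat \<Rightarrow> bool) set) set" where
  "part v s j = {(j, {x, vadd x (v j)}) | x. x \<in> span2 (v ` {1..s})}"

definition adjG :: "nat \<times> (nat \<Rightarrow> bool) set \<Rightarrow> nat \<times> (nat \<Rightarrow> bool) set \<Rightarrow> bool" where
  "adjG a b = (fst a \<noteq> fst b \<and> snd a \<inter> snd b \<noteq> {})"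

definition indep_set_GS :: "(nat \<Rightarrow> (nat \<Rightarrow> bool)) \<Rightarrow> nat \<Rightarrow> (nat \<times> (nat \<Rightarrow> bool) set) set \<Rightarrow> bool" where
  "indep_set_GS v s A = (A \<subseteq> (\<Union>j\<in>{1..s}. part v s j) \<and> (\<forall>a\<in>A. \<forall>b\<in>A. \<not> adjG a b))"

end

theory Submission
  imports Defs
begin

text \<open>Greedy argument. The span W of S has at least 2^(dim S) elements. Vertices are
  added one at a time to the part V_j that still needs one: if k vertices have been chosen,
  they cover at most 2k points of W, so at most 4k points x of W have x or x + v_j covered.
  While 4k < 2^(dim S), some coset {x, x + v_j} is disjoint from all chosen vertices and can
  be added; the total 2^(dim S - 2) is exactly the number of steps this allows.\<close>

lemma vadd_zero [simp]: "vadd x vzero = x" "vadd vzero x = x"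
  by (auto simp: vadd_def vzero_def)

lemma vadd_assoc: "vadd (vadd x y) z = vadd x (vadd y z)"
  by (auto simp: vadd_def fun_eq_iff)

lemma vadd_commute: "vadd x y = vadd y x"
  by (auto simp: vadd_def fun_eq_iff)

lemma vadd_cancel [simp]: "vadd (vadd x y) y = x" "vadd y (vadd y x) = x"
  by (auto simp: vadd_def fun_eq_iff)

lemma inj_vadd: "inj (vadd w)"
  by (rule injI) (metis vadd_cancel(2))

lemma span2_vadd_closed:
  assumes "x \<in> span2 S" "y \<in> span2 S"
  shows "vadd x y \<in> span2 S"
  using assms(2)
proof induction
  case zero
  then show ?case using assms(1) by simp
next
  case (add y v)
  have "vadd x (vadd y v) = vadd (vadd x y) v" by (simp add: vadd_assoc)
  then show ?case using add span2.add by metis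
qed

lemma span2_superset: "v \<in> S \<Longrightarrow> v \<in> span2 S"
  using span2.add[OF span2.zero] by fastforce

lemma span2_minimal:
  assumes "S \<subseteq> span2 T"
  shows "span2 S \<subseteq> span2 T"
proof
  fix x assume "x \<in> span2 S"
  then show "x \<in> span2 T"
    by induction (use assms span2.zero span2_vadd_closed in blast)+
qed

lemma span2_mono: "B \<subseteq> C \<Longrightarrow> span2 B \<subseteq> span2 C"
  using span2_minimal span2_superset by blast

lemma span2_empty: "span2 {} = {vzero}"
proof -
  have "x \<in> span2 {} \<Longrightarrow> x = vzero" for x
    by (induction rule: span2.induct) auto
  then show ?thesis using span2.zero by blast
qed

lemma span2_insert: "span2 (insert w B) = span2 B \<union> vadd w ` span2 B"
proof
  show "span2 (insert w B) \<subseteq> span2 B \<union> vadd w ` span2 B"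
  proof
    fix x assume "x \<in> span2 (insert w B)"
    then show "x \<in> span2 B \<union> vadd w ` span2 B"
    proof induction
      case zero
      then show ?case using span2.zero by blast
    next
      case (add x u)
      consider "x \<in> span2 B" | y where "y \<in> span2 B" "x = vadd w y"
        using add.IH by blast
      then show ?case
      proof cases
        case 1
        then show ?thesis
          using add.hyps(2) span2.add vadd_commute by (cases "u = w") blast+
      next
        case 2
        show ?thesis
        proof (cases "u = w")
          case True
          then have "vadd x u = y" using 2(2) by (simp add: vadd_commute)
          then show ?thesis using 2(1) by blast
        next
          case False
          have "vadd x u = vadd w (vadd y u)" using 2(2) by (simp add: vadd_assoc)
          then show ?thesis using 2(1) False add.hyps(2) span2.add by blast
        qed
      qed
    qed
  qed
next
  have w: "w \<in> span2 (insert w B)" by (rule span2_superset) simp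
  have B: "span2 B \<subseteq> span2 (insert w B)" by (rule span2_mono) blast
  show "span2 B \<union> vadd w ` span2 B \<subseteq> span2 (insert w B)"
    using B span2_vadd_closed[OF w] by blast
qed

lemma finite_vec2: "finite (vec2 n)"
proof -
  have "inj_on (\<lambda>v. {i. v i}) (vec2 n)"
    by (rule inj_onI) (auto simp: fun_eq_iff)
  moreover have "(\<lambda>v. {i. v i}) ` vec2 n \<subseteq> Pow {..<n}"
    by (auto simp: vec2_def) (meson not_le)
  ultimately show ?thesis
    by (meson finite_Pow_iff finite_lessThan finite_subset inj_on_finite)
qed

lemma span2_subset_vec2: "S \<subseteq> vec2 n \<Longrightarrow> span2 S \<subseteq> vec2 n"
  by (rule subsetI, erule span2.induct) (auto simp: vec2_def vzero_def vadd_def)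

lemma card_span2_insert:
  assumes "finite (span2 B)" "w \<notin> span2 B"
  shows "card (span2 (insert w B)) = 2 * card (span2 B)"
proof -
  have "span2 B \<inter> vadd w ` span2 B = {}"
  proof (rule ccontr)
    assume "span2 B \<inter> vadd w ` span2 B \<noteq> {}"
    then obtain y where "y \<in> span2 B" "vadd w y \<in> span2 B" by blast
    then have "vadd (vadd w y) y \<in> span2 B" using span2_vadd_closed by blast
    then show False using assms(2) by simp
  qed
  moreover have "card (vadd w ` span2 B) = card (span2 B)"
    by (rule card_image) (rule inj_on_subset[OF inj_vadd subset_UNIV])
  ultimately show ?thesis
    using assms(1) by (simp add: span2_insert card_Un_disjoint)
qed

lemma independent_spanning_set_exists:
  assumes "finite (span2 S)" "B \<subseteq> span2 S" "finite B" "card (span2 B) = 2 ^ card B"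
  shows "\<exists>B'. finite B' \<and> span2 B' = span2 S \<and> card (span2 B') = 2 ^ card B'"
  using assms(2-)
proof (induction "card (span2 S) - card (span2 B)" arbitrary: B rule: less_induct)
  case less
  have sub: "span2 B \<subseteq> span2 S" using less.prems(1) span2_minimal by blast
  show ?case
  proof (cases "span2 B = span2 S")
    case True
    then show ?thesis using less.prems by blast
  next
    case False
    then obtain w where w: "w \<in> span2 S" "w \<notin> span2 B" using sub by blast
    have wB: "w \<notin> B" using w span2_superset by blast
    have finB: "finite (span2 B)" using sub assms(1) finite_subset by blast
    have cardC: "card (span2 (insert w B)) = 2 ^ card (insert w B)"
      using card_span2_insert[OF finB w(2)] less.prems(2,3) wB by simp
    have "span2 (insert w B) \<subseteq> span2 S"
      using less.prems(1) w(1) span2_minimal by blast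
    then have "card (span2 (insert w B)) \<le> card (span2 S)"
      using assms(1) card_mono by blast
    moreover have "card (span2 B) < card (span2 (insert w B))"
      using card_span2_insert[OF finB w(2)] less.prems(3) by simp
    ultimately show ?thesis
      using less.hyps[of "insert w B"] less.prems(1,2) w(1) cardC by fastforce
  qed
qed

lemma card_span2_ge_pow_dim2:
  assumes "finite (span2 S)"
  shows "2 ^ dim2 S \<le> card (span2 S)"
proof -
  obtain B where B: "finite B" "span2 B = span2 S" "card (span2 B) = 2 ^ card B"
    using independent_spanning_set_exists[OF assms, of "{}"] by (auto simp: span2_empty)
  have "dim2 S \<le> card B"
    unfolding dim2_def by (rule Least_le) (use B in blast)
  then have "(2::nat) ^ dim2 S \<le> 2 ^ card B" by simp
  then show ?thesis using B by simp
qed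

lemma exists_point_avoiding_translate:
  assumes "finite U" "finite W" "2 * card U < card W"
  shows "\<exists>x\<in>W. x \<notin> U \<and> vadd x w \<notin> U"
proof (rule ccontr)
  assume "\<not> ?thesis"
  then have "W \<subseteq> U \<union> (\<lambda>y. vadd y w) ` U"
    by (auto intro: image_eqI[where x = "vadd _ w"])
  then have "card W \<le> card (U \<union> (\<lambda>y. vadd y w) ` U)"
    using assms(1) by (intro card_mono) auto
  also have "\<dots> \<le> card U + card ((\<lambda>y. vadd y w) ` U)" by (rule card_Un_le)
  also have "\<dots> \<le> 2 * card U" using card_image_le[OF assms(1)] by simp
  finally show False using assms(3) by simp
qed

lemma part_fst: "a \<in> part v s j \<Longrightarrow> fst a = j"
  by (auto simp: part_def)

lemma card_vertex_le_2: "a \<in> part v s j \<Longrightarrow> card (snd a) \<le> 2"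
  by (auto simp: part_def card_insert_le_m1)

lemma finite_vertex: "a \<in> part v s j \<Longrightarrow> finite (snd a)"
  by (auto simp: part_def)

lemma indep_set_GS_insert:
  assumes "indep_set_GS v s A" "j \<in> {1..s}" "e \<in> part v s j"
    and "\<forall>a\<in>A. snd e \<inter> snd a = {}"
  shows "indep_set_GS v s (insert e A)"
  using assms by (auto simp: indep_set_GS_def adjG_def)

lemma indep_set_GS_extend:
  assumes W: "finite (span2 (v ` {1..s}))"
    and A: "finite A" "indep_set_GS v s A" "4 * card A < card (span2 (v ` {1..s}))"
    and j: "j \<in> {1..s}"
  shows "\<exists>e\<in>part v s j. e \<notin> A \<and> indep_set_GS v s (insert e A)"
proof -
  define U where "U = (\<Union>a\<in>A. snd a)"
  have vertices: "\<forall>a\<in>A. \<exists>i. a \<in> part v s i"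
    using A(2) by (auto simp: indep_set_GS_def)
  have "card U \<le> (\<Sum>a\<in>A. card (snd a))"
    unfolding U_def using A(1) by (rule card_UN_le)
  also have "\<dots> \<le> 2 * card A"
    using sum_bounded_above[of A "\<lambda>a. card (snd a)" 2] vertices card_vertex_le_2
    by (simp add: mult.commute) blast
  finally have "2 * card U < card (span2 (v ` {1..s}))" using A(3) by simp
  moreover have "finite U"
    unfolding U_def using A(1) vertices finite_vertex by blast
  ultimately obtain x where x: "x \<in> span2 (v ` {1..s})" "x \<notin> U" "vadd x (v j) \<notin> U"
    using exists_point_avoiding_translate W by blast
  define e where "e = (j, {x, vadd x (v j)})"
  have e: "e \<in> part v s j" unfolding e_def part_def using x(1) by blast
  have disjoint: "\<forall>a\<in>A. snd e \<inter> snd a = {}"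
    using x(2,3) by (auto simp: e_def U_def)
  then have "e \<notin> A" by (auto simp: e_def)
  then show ?thesis
    using indep_set_GS_insert[OF A(2) j e disjoint] e by blast
qed

lemma indep_set_GS_with_part_sizes:
  assumes W: "finite (span2 (v ` {1..s}))"
    and size: "4 * (\<Sum>j=1..s. c j) \<le> card (span2 (v ` {1..s}))"
  shows "\<exists>A. finite A \<and> indep_set_GS v s A \<and> card A = (\<Sum>j=1..s. c j)
            \<and> (\<forall>j\<in>{1..s}. card (A \<inter> part v s j) = c j)"
  using size
proof (induction "\<Sum>j=1..s. c j" arbitrary: c)
  case 0
  then show ?case by (intro exI[of _ "{}"]) (auto simp: indep_set_GS_def)
next
  case (Suc k)
  obtain j where j: "j \<in> {1..s}" "c j > 0"
    using Suc.hyps(2) by (metis sum.neutral nat.distinct(1) neq0_conv)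
  define c' where "c' = c(j := c j - 1)"
  have "(\<Sum>i=1..s. c i) = c j + (\<Sum>i\<in>{1..s}-{j}. c i)"
    and "(\<Sum>i=1..s. c' i) = c' j + (\<Sum>i\<in>{1..s}-{j}. c' i)"
    using j(1) by (auto intro: sum.remove)
  moreover have "(\<Sum>i\<in>{1..s}-{j}. c' i) = (\<Sum>i\<in>{1..s}-{j}. c i)"
    by (rule sum.cong) (auto simp: c'_def)
  ultimately have sum_c': "k = (\<Sum>i=1..s. c' i)"
    using Suc.hyps(2) j(2) by (simp add: c'_def)
  have "4 * (\<Sum>i=1..s. c' i) \<le> card (span2 (v ` {1..s}))"
    using Suc.prems Suc.hyps(2) sum_c' by simp
  then obtain A where A: "finite A" "indep_set_GS v s A" "card A = k"
    "\<forall>i\<in>{1..s}. card (A \<inter> part v s i) = c' i"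
    using Suc.hyps(1)[OF sum_c'] sum_c' by auto
  obtain e where e: "e \<in> part v s j" "e \<notin> A" "indep_set_GS v s (insert e A)"
    using indep_set_GS_extend[OF W A(1,2) _ j(1)] A(3) Suc.prems Suc.hyps(2) by auto
  have "card (insert e A \<inter> part v s i) = c i" if i: "i \<in> {1..s}" for i
  proof (cases "i = j")
    case True
    then have "insert e A \<inter> part v s i = insert e (A \<inter> part v s j)" using e(1) by auto
    then show ?thesis using A(1,4) e(2) j True by (simp add: c'_def)
  next
    case False
    then have "e \<notin> part v s i" using part_fst e(1) by metis
    then have "insert e A \<inter> part v s i = A \<inter> part v s i" by auto
    then show ?thesis using A(4) i False by (simp add: c'_def)
  qed
  then show ?case
    using A(1,3) e(2,3) Suc.hyps(2) by (intro exI[of _ "insert e A"]) auto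
qed

theorem mainTheorem14:
  fixes n s :: nat and v :: "nat \<Rightarrow> (nat \<Rightarrow> bool)" and b :: "nat \<Rightarrow> nat"
  assumes "2 \<le> s" and "s \<le> 2 ^ (n - 2)"
    and "\<forall>j\<in>{1..s}. v j \<in> vec2 n \<and> v j \<noteq> vzero"
    and "inj_on v {1..s}"
    and "dim2 (v ` {1..s}) \<ge> 2"
    and "(\<Sum>j=1..s. b j) = 2 ^ (dim2 (v ` {1..s}) - 2)"
  shows "\<exists>A. indep_set_GS v s A \<and> card A = 2 ^ (dim2 (v ` {1..s}) - 2)
            \<and> (\<forall>j\<in>{1..s}. card (A \<inter> part v s j) = b j)"
proof -
  let ?d = "dim2 (v ` {1..s})"
  have "span2 (v ` {1..s}) \<subseteq> vec2 n"
    using assms(3) span2_subset_vec2[of "v ` {1..s}" n] by blast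
  then have W: "finite (span2 (v ` {1..s}))"
    using finite_vec2 finite_subset by blast
  obtain m where "?d = m + 2" using assms(5) le_add_diff_inverse2 by metis
  then have "4 * 2 ^ (?d - 2) = (2::nat) ^ ?d" by simp
  then have "4 * (\<Sum>j=1..s. b j) \<le> card (span2 (v ` {1..s}))"
    using assms(6) card_span2_ge_pow_dim2[OF W] by simp
  then show ?thesis
    using indep_set_GS_with_part_sizes[OF W] assms(6) by metis
qed

end
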